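(* Let $f,\hat f:M^2\to\mathbb{R}^3=\operatorname{Im}\mathbb{H}$ be non-flat conformal minimal immersions forming a Darboux pair, with $\hat f$ a Darboux transform of $f$ with parameter $t\in\mathbb{R}\setminus\{0\}$ with respect to the Christoffel dual $f^*=n$, where $n$ is the Gauss map of $f$, and let $\hat n=-(\hat f-f)^{-1}n(\hat f-f)$ be the Gauss map of $\hat f$. Then, up to translation, $$\hat f=f+\tfrac1t(\hat n-n)^{-1}.$$
   Context: $\mathbb{R}^3$ is identified with $\operatorname{Im}\mathbb{H}$ with product $xy=-\langle x,y\rangle+x\times y$ and $x^{-1}=-x/|x|^2$. The Gauss map $n$ of a minimal surface is a Christoffel dual of $f$ (Christoffel dual: locally, up to homothety and translation, a solution of $df^*=-\frac1E(f_udu-f_vdv)$ in conformal curvature line coordinates with metric $E(du^2+dv^2)$). A Darboux transform with parameter $t$ with respect to $f^*$ is a solution $\hat f$ of $d\hat f=t(\hat f-f)\,df^*(\hat f-f)$. A Darboux pair is a pair of surfaces enveloping a common 2-sphere congruence (first order contact at corresponding points), with commuting shape operators and conformally equivalent induced metrics. *)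

theory Defs
  imports "HOL-Analysis.Analysis"
begin

text \<open>Surfaces are parametrised locally on an open connected domain U of R^2
  (coordinates (u,v), type real \<times> real) with values in R^3 = Im H (type real^3).
  Quaternions H are modelled as pairs (real part, imaginary part).\<close>

type_synonym quat = "real \<times> (real^3)"

definition qmult :: "quat \<Rightarrow> quat \<Rightarrow> quat" where
  "qmult x y = (fst x * fst y - inner (snd x) (snd y),
                fst x *\<^sub>R snd y + fst y *\<^sub>R snd x + cross3 (snd x) (snd y))"

definition Imq :: "real^3 \<Rightarrow> quat" where
  "Imq x = (0, x)"

definition iinv :: "real^3 \<Rightarrow> real^3" where
  "iinv x = - ((1 / (norm x)^2) *\<^sub>R x)"

definition pu :: "(real \<times> real \<Rightarrow> 'a::real_normed_vector) \<Rightarrow> real \<times> real \<Rightarrow> 'a" where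
  "pu f p = frechet_derivative f (at p) (1, 0)"

definition pv :: "(real \<times> real \<Rightarrow> 'a::real_normed_vector) \<Rightarrow> real \<times> real \<Rightarrow> 'a" where
  "pv f p = frechet_derivative f (at p) (0, 1)"

definition C2_on :: "(real \<times> real) set \<Rightarrow> (real \<times> real \<Rightarrow> real^3) \<Rightarrow> bool" where
  "C2_on U f \<longleftrightarrow> f differentiable_on U \<and> pu f differentiable_on U \<and> pv f differentiable_on U
     \<and> continuous_on U (pu (pu f)) \<and> continuous_on U (pv (pu f))
     \<and> continuous_on U (pu (pv f)) \<and> continuous_on U (pv (pv f))"

definition immersion_on :: "(real \<times> real) set \<Rightarrow> (real \<times> real \<Rightarrow> real^3) \<Rightarrow> bool" where
  "immersion_on U f \<longleftrightarrow> C2_on U f \<and> (\<forall>p\<in>U. cross3 (pu f p) (pv f p) \<noteq> 0)"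

definition conformal_on :: "(real \<times> real) set \<Rightarrow> (real \<times> real \<Rightarrow> real^3) \<Rightarrow> bool" where
  "conformal_on U f \<longleftrightarrow> (\<forall>p\<in>U. inner (pu f p) (pu f p) = inner (pv f p) (pv f p)
                                 \<and> inner (pu f p) (pv f p) = 0)"

definition gauss_map :: "(real \<times> real \<Rightarrow> real^3) \<Rightarrow> real \<times> real \<Rightarrow> real^3" where
  "gauss_map f p = (1 / norm (cross3 (pu f p) (pv f p))) *\<^sub>R cross3 (pu f p) (pv f p)"

definition fE where "fE f p = inner (pu f p) (pu f p)"
definition fF where "fF f p = inner (pu f p) (pv f p)"
definition fG where "fG f p = inner (pv f p) (pv f p)"
definition sL where "sL f p = inner (pu (pu f) p) (gauss_map f p)"
definition sM where "sM f p = inner (pv (pu f) p) (gauss_map f p)"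
definition sN where "sN f p = inner (pv (pv f) p) (gauss_map f p)"

definition mean_curvature :: "(real \<times> real \<Rightarrow> real^3) \<Rightarrow> real \<times> real \<Rightarrow> real" where
  "mean_curvature f p = (sL f p * fG f p - 2 * sM f p * fF f p + sN f p * fE f p)
                         / (2 * (fE f p * fG f p - (fF f p)^2))"

definition gauss_curvature :: "(real \<times> real \<Rightarrow> real^3) \<Rightarrow> real \<times> real \<Rightarrow> real" where
  "gauss_curvature f p = (sL f p * sN f p - (sM f p)^2) / (fE f p * fG f p - (fF f p)^2)"

definition minimal_on :: "(real \<times> real) set \<Rightarrow> (real \<times> real \<Rightarrow> real^3) \<Rightarrow> bool" where
  "minimal_on U f \<longleftrightarrow> (\<forall>p\<in>U. mean_curvature f p = 0)"

definition nonflat_on :: "(real \<times> real) set \<Rightarrow> (real \<times> real \<Rightarrow> real^3) \<Rightarrow> bool" where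
  "nonflat_on U f \<longleftrightarrow> (\<exists>p\<in>U. gauss_curvature f p \<noteq> 0)"

definition darboux_transform ::
  "(real \<times> real) set \<Rightarrow> (real \<times> real \<Rightarrow> real^3) \<Rightarrow> (real \<times> real \<Rightarrow> real^3) \<Rightarrow> real
     \<Rightarrow> (real \<times> real \<Rightarrow> real^3) \<Rightarrow> bool" where
  "darboux_transform U f fs t hf \<longleftrightarrow>
     (\<forall>p\<in>U. hf differentiable (at p) \<and> fs differentiable (at p) \<and>
        (\<forall>w. Imq (frechet_derivative hf (at p) w)
              = t *\<^sub>R qmult (qmult (Imq (hf p - f p)) (Imq (frechet_derivative fs (at p) w)))
                             (Imq (hf p - f p))))"

text \<open>Darboux pair: (i) f and hf envelope a common (smooth) 2-sphere congruence
  {x. a |x|^2 - 2 <b,x> + c = 0} (|b|^2 - a c > 0; a = 0 gives planes) with first order contact,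
  i.e. the point lies on the sphere and the sphere normal a x - b is parallel to the surface normal;
  (ii) commuting shape operators; (iii) conformally equivalent induced metrics.\<close>
definition envelopes_sphere :: "real \<Rightarrow> real^3 \<Rightarrow> real \<Rightarrow> real^3 \<Rightarrow> real^3 \<Rightarrow> bool" where
  "envelopes_sphere a b c x nrm \<longleftrightarrow>
     a * (norm x)^2 - 2 * inner b x + c = 0 \<and> cross3 (a *\<^sub>R x - b) nrm = 0"

definition shape_operators_commute ::
  "(real \<times> real \<Rightarrow> real^3) \<Rightarrow> (real \<times> real \<Rightarrow> real^3) \<Rightarrow> real \<times> real \<Rightarrow> bool" where
  "shape_operators_commute f hf p \<longleftrightarrow>
     (\<forall>A B :: real \<times> real \<Rightarrow> real \<times> real. linear A \<and> linear B \<and>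
        (\<forall>w. frechet_derivative (gauss_map f) (at p) w = - frechet_derivative f (at p) (A w)) \<and>
        (\<forall>w. frechet_derivative (gauss_map hf) (at p) w = - frechet_derivative hf (at p) (B w))
        \<longrightarrow> A \<circ> B = B \<circ> A)"

definition darboux_pair ::
  "(real \<times> real) set \<Rightarrow> (real \<times> real \<Rightarrow> real^3) \<Rightarrow> (real \<times> real \<Rightarrow> real^3) \<Rightarrow> bool" where
  "darboux_pair U f hf \<longleftrightarrow>
     (\<exists>a b c. a differentiable_on U \<and> b differentiable_on U \<and> c differentiable_on U \<and>
        (\<forall>p\<in>U. inner (b p) (b p) - a p * c p > 0 \<and>
                envelopes_sphere (a p) (b p) (c p) (f p) (gauss_map f p) \<and>
                envelopes_sphere (a p) (b p) (c p) (hf p) (gauss_map hf p))) \<and>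
     (\<forall>p\<in>U. shape_operators_commute f hf p) \<and>
     (\<exists>lam. \<forall>p\<in>U. lam p > 0 \<and> (\<forall>w w'.
        inner (frechet_derivative hf (at p) w) (frechet_derivative hf (at p) w')
        = lam p * inner (frechet_derivative f (at p) w) (frechet_derivative f (at p) w')))"

end

theory Submission
  imports Defs
begin

(*
  Put g = \<hat>f - f. The Darboux equation reads d\<hat>f = t g dn g = t |g|\<^sup>2 R(dn), where R is the
  reflection in the plane orthogonal to g, and the prescribed \<hat>n = -g\<^sup>-\<^sup>1 n g equals R(n), a unit
  normal of \<hat>f. Testing the minimality of \<hat>f against the normal field R(n) and subtracting the
  minimality of f gives (1 - 2t<g,n>) |dn|\<^sup>2 = 0. Where 1 - 2t<g,n> is nonzero, dn vanishes, so there
  this function is locally constant and f is flat; as f is somewhere non-flat and U is connected,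
  2t<g,n> = 1 everywhere. Then \<hat>n - n = 2<g,n> g\<^sup>-\<^sup>1 = t\<^sup>-\<^sup>1 g\<^sup>-\<^sup>1, which inverts to the claim.
*)

lemma linear_pair_expand:
  fixes L :: "real \<times> real \<Rightarrow> 'a::real_vector"
  assumes "linear L"
  shows "L w = fst w *\<^sub>R L (1, 0) + snd w *\<^sub>R L (0, 1)"
proof -
  have "w = fst w *\<^sub>R (1, 0) + snd w *\<^sub>R (0, 1)"
    by (simp add: prod_eq_iff)
  then have "L w = L (fst w *\<^sub>R (1, 0) + snd w *\<^sub>R (0, 1))"
    by (rule arg_cong)
  then show ?thesis
    by (simp only: linear_add[OF assms] linear_scale[OF assms])
qed

lemma inner_derivative_if_inner_constant:
  fixes X Y :: "'a::real_normed_vector \<Rightarrow> 'b::real_inner"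
  assumes "open U" "p \<in> U" "\<And>x. x \<in> U \<Longrightarrow> inner (X x) (Y x) = c"
    and X: "(X has_derivative X') (at p)" and Y: "(Y has_derivative Y') (at p)"
  shows "inner (X' w) (Y p) = - inner (X p) (Y' w)"
proof -
  have "((\<lambda>x. inner (X x) (Y x)) has_derivative (\<lambda>w. inner (X p) (Y' w) + inner (X' w) (Y p))) (at p)"
    using X Y by (rule has_derivative_inner)
  moreover have "((\<lambda>x. inner (X x) (Y x)) has_derivative (\<lambda>w. 0)) (at p)"
    using has_derivative_const assms(1,2)
    by (rule has_derivative_transform_within_open) (simp add: assms(3))
  ultimately have "(\<lambda>w. inner (X p) (Y' w) + inner (X' w) (Y p)) = (\<lambda>w. 0)"
    by (rule has_derivative_unique)
  then show ?thesis
    by (metis add_eq_0_iff)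
qed

lemma zero_if_locally_constant_where_nonzero:
  fixes h :: "'a::real_normed_vector \<Rightarrow> real"
  assumes U: "open U" "connected U" and cont: "continuous_on U h"
    and deriv: "\<And>y. y \<in> U \<Longrightarrow> h y \<noteq> 0 \<Longrightarrow> (h has_derivative (\<lambda>_. 0)) (at y)"
    and "p \<in> U" "h p = 0" "x \<in> U"
  shows "h x = 0"
proof (rule ccontr)
  assume hx: "h x \<noteq> 0"
  define S where "S = {y \<in> U. h y = h x}"
  have "\<exists>e>0. ball y e \<subseteq> S" if "y \<in> S" for y
  proof -
    have y: "y \<in> U \<inter> h -` (- {0})" "h y = h x"
      using that hx by (auto simp: S_def)
    have "open (U \<inter> h -` (- {0}))"
      using cont U(1) by (rule continuous_open_preimage) auto
    then obtain e where e: "e > 0" "ball y e \<subseteq> U \<inter> h -` (- {0})"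
      using y(1) by (rule openE)
    have "\<exists>c. \<forall>z\<in>ball y e. h z = c"
    proof (rule has_derivative_zero_constant[OF convex_ball])
      fix z assume "z \<in> ball y e"
      then have "z \<in> U" "h z \<noteq> 0"
        using e(2) by auto
      then show "(h has_derivative (\<lambda>_. 0)) (at z within ball y e)"
        by (simp add: has_derivative_at_withinI deriv)
    qed
    then obtain c where c: "\<forall>z\<in>ball y e. h z = c" ..
    have "c = h x"
      using c e(1) y(2) by (metis centre_in_ball)
    then have "ball y e \<subseteq> S"
      using c e(2) by (auto simp: S_def)
    then show ?thesis
      using e(1) by blast
  qed
  then have "openin (top_of_set U) S"
    using U(1) by (auto simp: openin_open_eq open_contains_ball S_def)
  then have "\<forall>y\<in>U. h y = h x"
    unfolding S_def using continuous_levelset_openin[OF U(2) cont] \<open>x \<in> U\<close> by blast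
  then show False
    using hx assms(5,6) by metis
qed

lemma parallel_cross3_if_orthogonal:
  fixes x a b :: "real^3"
  assumes "inner x a = 0" "inner x b = 0" "cross3 a b \<noteq> 0"
  shows "x = (inner (cross3 a b) x / inner (cross3 a b) (cross3 a b)) *\<^sub>R cross3 a b"
proof -
  let ?c = "cross3 a b"
  have "cross3 x ?c = 0"
    using assms by (simp add: Lagrange)
  then have "cross3 ?c x = 0"
    by (metis cross_skew neg_equal_0_iff_equal)
  then have "cross3 ?c (cross3 ?c x) = 0"
    by simp
  then have "inner ?c x *\<^sub>R ?c = inner ?c ?c *\<^sub>R x"
    by (simp add: Lagrange)
  moreover have "inner ?c ?c \<noteq> 0"
    using assms(3) by simp
  ultimately show ?thesis
    by (metis (no_types, lifting) divide_inverse_commute right_inverse scaleR_one scaleR_scaleR)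
qed

lemma differentiable_cross3:
  assumes "a differentiable (at p)" "b differentiable (at p)"
  shows "(\<lambda>x. cross3 (a x) (b x)) differentiable (at p)"
proof -
  have "bounded_bilinear cross3"
    using bilinear_conv_bounded_bilinear bilinear_cross by blast
  then show ?thesis
    using assms unfolding differentiable_def by (blast intro: bounded_bilinear.FDERIV)
qed

section \<open>Conformal minimal immersions\<close>

lemma norm_gauss_map:
  assumes "cross3 (pu f p) (pv f p) \<noteq> 0"
  shows "norm (gauss_map f p) = 1"
  using assms by (simp add: gauss_map_def)

lemma inner_gauss_map:
  "inner (pu f p) (gauss_map f p) = 0" "inner (pv f p) (gauss_map f p) = 0"
  by (simp_all add: gauss_map_def dot_cross_self)

lemma gauss_map_differentiable:
  assumes "immersion_on U f" "open U" "p \<in> U"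
  shows "gauss_map f differentiable (at p)"
proof -
  define c where "c x = cross3 (pu f x) (pv f x)" for x
  have "pu f differentiable (at p)" "pv f differentiable (at p)"
    using assms by (auto simp: immersion_on_def C2_on_def differentiable_on_eq_differentiable_at)
  then have c: "c differentiable (at p)"
    unfolding c_def[abs_def] by (rule differentiable_cross3)
  have "c p \<noteq> 0"
    using assms by (simp add: immersion_on_def c_def)
  then have "(\<lambda>x. norm (c x)) differentiable (at p)"
    using differentiable_compose[of norm c p] c differentiable_norm_at by blast
  then have "(\<lambda>x. 1 / norm (c x)) differentiable (at p)"
    using \<open>c p \<noteq> 0\<close> by (intro differentiable_divide) auto
  then have "(\<lambda>x. (1 / norm (c x)) *\<^sub>R c x) differentiable (at p)"
    using c by (rule differentiable_scaleR)
  then show ?thesis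
    by (simp add: gauss_map_def[abs_def] c_def)
qed

lemma has_derivative_partials:
  assumes "C2_on U f" "open U" "p \<in> U"
  shows "(f has_derivative frechet_derivative f (at p)) (at p)"
    and "(pu f has_derivative frechet_derivative (pu f) (at p)) (at p)"
    and "(pv f has_derivative frechet_derivative (pv f) (at p)) (at p)"
  using assms by (auto simp: C2_on_def differentiable_on_eq_differentiable_at frechet_derivative_works)

lemma conformal_minimal_laplacian_orthogonal:
  assumes "conformal_on U f" "minimal_on U f" "p \<in> U" "cross3 (pu f p) (pv f p) \<noteq> 0"
    and "inner x (pu f p) = 0" "inner x (pv f p) = 0"
  shows "inner (pu (pu f) p + pv (pv f) p) x = 0"
proof -
  let ?c = "cross3 (pu f p) (pv f p)"
  have conformal: "fE f p = fG f p" "fF f p = 0"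
    using assms(1,3) by (auto simp: conformal_on_def fE_def fG_def fF_def)
  have "pu f p \<noteq> 0"
    using assms(4) by auto
  then have E: "fE f p \<noteq> 0"
    by (simp add: fE_def)
  moreover have "mean_curvature f p = 0"
    using assms(2,3) by (simp add: minimal_on_def)
  ultimately have "(sL f p + sN f p) * fE f p = 0"
    using conformal by (simp add: mean_curvature_def distrib_right)
  then have "sL f p + sN f p = 0"
    using E by simp
  then have "inner (pu (pu f) p + pv (pv f) p) (gauss_map f p) = 0"
    by (simp add: sL_def sN_def inner_add_left)
  then have "inner (pu (pu f) p + pv (pv f) p) ?c = 0"
    using assms(4) by (simp add: gauss_map_def)
  moreover have "x = (inner ?c x / inner ?c ?c) *\<^sub>R ?c"
    using assms(5,6,4) by (rule parallel_cross3_if_orthogonal)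
  ultimately show ?thesis
    by (metis inner_scaleR_right mult_zero_right)
qed

lemma conformal_minimal_normal_field:
  assumes U: "open U" "p \<in> U" and f: "immersion_on U f" "conformal_on U f" "minimal_on U f"
    and N: "(N has_derivative N') (at p)"
    and tangent: "\<And>x. x \<in> U \<Longrightarrow> inner (pu f x) (N x) = 0" "\<And>x. x \<in> U \<Longrightarrow> inner (pv f x) (N x) = 0"
  shows "inner (pu f p) (N' (1, 0)) + inner (pv f p) (N' (0, 1)) = 0"
proof -
  have C2: "C2_on U f" and cross: "cross3 (pu f p) (pv f p) \<noteq> 0"
    using f(1) U(2) by (auto simp: immersion_on_def)
  have "inner (pu (pu f) p) (N p) = - inner (pu f p) (N' (1, 0))"
    using inner_derivative_if_inner_constant[OF U tangent(1) has_derivative_partials(2)[OF C2 U] N]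
    by (simp add: pu_def[of "pu f"])
  moreover have "inner (pv (pv f) p) (N p) = - inner (pv f p) (N' (0, 1))"
    using inner_derivative_if_inner_constant[OF U tangent(2) has_derivative_partials(3)[OF C2 U] N]
    by (simp add: pv_def[of "pv f"])
  moreover have "inner (pu (pu f) p + pv (pv f) p) (N p) = 0"
    using f(2,3) U(2) cross
    by (rule conformal_minimal_laplacian_orthogonal) (use tangent U(2) in \<open>simp_all add: inner_commute\<close>)
  ultimately show ?thesis
    by (simp add: inner_add_left)
qed

lemma gauss_curvature_eq_0_if_critical_normal:
  assumes U: "open U" "p \<in> U" and f: "immersion_on U f"
    and N: "\<And>x. x \<in> U \<Longrightarrow> N x = gauss_map f x" "(N has_derivative (\<lambda>_. 0)) (at p)"
  shows "gauss_curvature f p = 0"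
proof -
  have C2: "C2_on U f"
    using f by (simp add: immersion_on_def)
  have tangent: "inner (pu f x) (N x) = 0" "inner (pv f x) (N x) = 0" if "x \<in> U" for x
    using N(1)[OF that] by (simp_all add: inner_gauss_map)
  have "inner (pu (pu f) p) (N p) = 0" "inner (pv (pu f) p) (N p) = 0" "inner (pv (pv f) p) (N p) = 0"
    using inner_derivative_if_inner_constant[OF U tangent(1) has_derivative_partials(2)[OF C2 U] N(2)]
      inner_derivative_if_inner_constant[OF U tangent(2) has_derivative_partials(3)[OF C2 U] N(2)]
    by (simp_all add: pu_def[of "pu f"] pv_def[of "pu f"] pv_def[of "pv f"])
  then show ?thesis
    using N(1)[OF U(2)] by (simp add: gauss_curvature_def sL_def sM_def sN_def)
qed

section \<open>Reflections and imaginary quaternions\<close>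

definition reflect :: "'a::real_inner \<Rightarrow> 'a \<Rightarrow> 'a" where
  "reflect g x = x - (2 * inner g x / inner g g) *\<^sub>R g"

definition reflect_derivative :: "'a::real_inner \<Rightarrow> 'a \<Rightarrow> 'a \<Rightarrow> 'a \<Rightarrow> 'a" where
  "reflect_derivative g x g' x' = reflect g x'
     - ((2 * inner g x / inner g g) *\<^sub>R g'
        + (2 * inner g' x / inner g g - 4 * inner g x * inner g g' / (inner g g)\<^sup>2) *\<^sub>R g)"

lemma scaleR_reflect: "inner g g *\<^sub>R reflect g x = inner g g *\<^sub>R x - (2 * inner g x) *\<^sub>R g"
  by (cases "g = 0") (simp_all add: reflect_def scaleR_diff_right)

lemma inner_reflect_reflect:
  assumes "g \<noteq> 0"
  shows "inner (reflect g x) (reflect g y) = inner x y"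
  using assms by (simp add: reflect_def inner_diff_left inner_diff_right
      inner_commute[of x g] inner_commute[of y g] field_simps)

lemma has_derivative_reflect:
  assumes G: "(G has_derivative G') (at p)" and X: "(X has_derivative X') (at p)" and "G p \<noteq> 0"
  shows "((\<lambda>q. reflect (G q) (X q)) has_derivative
           (\<lambda>w. reflect_derivative (G p) (X p) (G' w) (X' w))) (at p)"
proof -
  let ?N = "inner (G p) (G p)" and ?k = "inner (G p) (X p)"
  have "((\<lambda>q. reflect (G q) (X q)) has_derivative (\<lambda>w. X' w - ((2 * ?k / ?N) *\<^sub>R G' w
      + ((2 * (inner (G p) (X' w) + inner (G' w) (X p)) * ?N
          - 2 * ?k * (inner (G p) (G' w) + inner (G' w) (G p))) / (?N * ?N)) *\<^sub>R G p))) (at p)"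
    unfolding reflect_def
    by (rule has_derivative_diff[OF X has_derivative_scaleR[OF has_derivative_divide'[OF
          has_derivative_mult_right[OF has_derivative_inner[OF G X]] has_derivative_inner[OF G G]] G]])
      (use \<open>G p \<noteq> 0\<close> in simp)
  moreover have coefficient: "((2 * (inner (G p) (X' w) + inner (G' w) (X p)) * ?N
          - 2 * ?k * (inner (G p) (G' w) + inner (G' w) (G p))) / (?N * ?N))
      = 2 * inner (G p) (X' w) / ?N + (2 * inner (G' w) (X p) / ?N - 4 * ?k * inner (G p) (G' w) / ?N\<^sup>2)"
    for w using \<open>G p \<noteq> 0\<close> by (simp add: inner_commute[of "G' w"] power2_eq_square field_simps)
  ultimately show ?thesis
    unfolding coefficient
    by (elim has_derivative_eq_rhs)
      (simp add: fun_eq_iff reflect_derivative_def reflect_def scaleR_add_left algebra_simps)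
qed

lemma inner_reflect_derivative_darboux:
  fixes g x v d :: "'a::real_inner" and t :: real
  assumes vx: "inner v x = 0" and dx: "inner d x = 0" and "g \<noteq> 0"
  defines "h' \<equiv> (t * inner g g) *\<^sub>R reflect g v" and "g' \<equiv> (t * inner g g) *\<^sub>R reflect g v - d"
  shows "inner h' (reflect_derivative g x g' v)
    = t * inner g g * (1 - 2 * t * inner g x) * inner v v + 2 * t * inner g x * inner v d"
proof -
  let ?N = "inner g g" and ?k = "inner g x" and ?r = "reflect g v"
  have N: "?N \<noteq> 0"
    using \<open>g \<noteq> 0\<close> by simp
  have rr: "inner ?r ?r = inner v v"
    using \<open>g \<noteq> 0\<close> by (rule inner_reflect_reflect)
  have rg: "inner ?r g = - inner g v"
    using N by (simp add: reflect_def inner_diff_left inner_commute[of v])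
  have rx: "inner ?r x = - 2 * inner g v * ?k / ?N"
    using vx by (simp add: reflect_def inner_diff_left)
  have rd: "inner ?r d = inner v d - 2 * inner g v * inner g d / ?N"
    by (simp add: reflect_def inner_diff_left)
  have g'x: "inner g' x = - 2 * t * ?k * inner g v"
    using N dx rx by (simp add: g'_def inner_diff_left)
  have gg': "inner g g' = - t * ?N * inner g v - inner g d"
    using rg by (simp add: g'_def inner_diff_right inner_commute[of g "reflect g v"])
  have rg': "inner ?r g' = t * ?N * inner v v - inner v d + 2 * inner g v * inner g d / ?N"
    using rr rd by (simp add: g'_def inner_diff_right)
  have "inner h' (reflect_derivative g x g' v)
      = t * ?N * (inner ?r ?r - (2 * ?k / ?N) * inner ?r g'
          - (2 * inner g' x / ?N - 4 * ?k * inner g g' / ?N\<^sup>2) * inner ?r g)"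
    unfolding reflect_derivative_def h'_def
    by (simp add: inner_diff_right inner_add_right algebra_simps)
  also have "\<dots> = t * ?N * (1 - 2 * t * ?k) * inner v v + 2 * t * ?k * inner v d"
    unfolding rr rg g'x gg' rg' using N by (simp add: power2_eq_square field_simps)
  finally show ?thesis .
qed

lemma snd_qmult_Imq_Imq_Imq:
  "snd (qmult (qmult (Imq a) (Imq b)) (Imq c)) = (- inner a b) *\<^sub>R c + cross3 (cross3 a b) c"
  by (simp add: qmult_def Imq_def)

lemma cross3_cross3_left_self: "cross3 (cross3 g x) g = inner g g *\<^sub>R x - inner g x *\<^sub>R g"
proof -
  have "cross3 (cross3 g x) g = - cross3 g (cross3 g x)"
    by (rule cross_skew)
  also have "\<dots> = inner g g *\<^sub>R x - inner g x *\<^sub>R g"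
    by (simp add: Lagrange)
  finally show ?thesis .
qed

lemma snd_qmult_Imq_sandwich:
  "snd (qmult (qmult (Imq g) (Imq x)) (Imq g)) = inner g g *\<^sub>R reflect g x"
proof -
  have "snd (qmult (qmult (Imq g) (Imq x)) (Imq g)) = (- inner g x) *\<^sub>R g + (inner g g *\<^sub>R x - inner g x *\<^sub>R g)"
    by (simp only: snd_qmult_Imq_Imq_Imq cross3_cross3_left_self)
  also have "\<dots> = inner g g *\<^sub>R x - (inner g x + inner g x) *\<^sub>R g"
    by (simp only: scaleR_add_left) (simp add: algebra_simps)
  also have "\<dots> = inner g g *\<^sub>R x - (2 * inner g x) *\<^sub>R g"
    by simp
  finally show ?thesis
    by (simp only: scaleR_reflect)
qed

lemma iinv_scaleR: "iinv (c *\<^sub>R x) = (1 / c) *\<^sub>R iinv x"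
  unfolding iinv_def norm_scaleR power_mult_distrib power2_abs
  by (cases "c = 0 \<or> x = 0") (auto simp: power2_eq_square)

lemma iinv_iinv: "iinv (iinv x) = x"
  by (cases "x = 0") (simp_all add: iinv_def power2_eq_square)

lemma reflect_minus_self: "reflect g x - x = (2 * inner g x) *\<^sub>R iinv g"
  by (simp add: reflect_def iinv_def dot_square_norm)

lemma reflect_eq_conjugation:
  assumes "g \<noteq> 0"
  shows "- snd (qmult (qmult (Imq (iinv g)) (Imq x)) (Imq g)) = reflect g x"
proof -
  have "iinv g = (- 1 / inner g g) *\<^sub>R g"
    by (simp add: iinv_def dot_square_norm)
  then have "snd (qmult (qmult (Imq (iinv g)) (Imq x)) (Imq g))
      = (- 1 / inner g g) *\<^sub>R snd (qmult (qmult (Imq g) (Imq x)) (Imq g))"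
    by (simp add: snd_qmult_Imq_Imq_Imq cross_mult_left scaleR_add_right scaleR_diff_right)
  then show ?thesis
    using assms by (simp add: snd_qmult_Imq_sandwich)
qed

section \<open>Minimal Darboux transforms\<close>

locale minimal_darboux_transform =
  fixes U :: "(real \<times> real) set" and f hf n :: "real \<times> real \<Rightarrow> real^3" and t :: real
  assumes open_U: "open U"
    and immersion_f: "immersion_on U f" and conformal_f: "conformal_on U f"
    and minimal_f: "minimal_on U f"
    and immersion_hf: "immersion_on U hf" and conformal_hf: "conformal_on U hf"
    and minimal_hf: "minimal_on U hf"
    and normal_f: "\<And>p. p \<in> U \<Longrightarrow> n p = gauss_map f p"
    and darboux: "darboux_transform U f n t hf"
    and t_nonzero: "t \<noteq> 0"
begin

abbreviation df where "df p \<equiv> frechet_derivative f (at p)"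
abbreviation dhf where "dhf p \<equiv> frechet_derivative hf (at p)"
abbreviation dn where "dn p \<equiv> frechet_derivative n (at p)"

definition g :: "real \<times> real \<Rightarrow> real^3" where
  "g p = hf p - f p"

definition defect :: "real \<times> real \<Rightarrow> real" where
  "defect p = 1 - 2 * t * inner (g p) (n p)"

lemma has_derivative_f: "p \<in> U \<Longrightarrow> (f has_derivative df p) (at p)"
  using immersion_f open_U by (auto simp: immersion_on_def intro: has_derivative_partials)

lemma has_derivative_hf: "p \<in> U \<Longrightarrow> (hf has_derivative dhf p) (at p)"
  using immersion_hf open_U by (auto simp: immersion_on_def intro: has_derivative_partials)

lemma has_derivative_n:
  assumes "p \<in> U"
  shows "(n has_derivative dn p) (at p)"
proof -
  obtain D where "(gauss_map f has_derivative D) (at p)"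
    using gauss_map_differentiable[OF immersion_f open_U assms] by (auto simp: differentiable_def)
  then have "(n has_derivative D) (at p)"
    using open_U assms by (rule has_derivative_transform_within_open) (simp add: normal_f)
  then show ?thesis
    using frechet_derivative_at by blast
qed

lemma has_derivative_g: "p \<in> U \<Longrightarrow> (g has_derivative (\<lambda>w. dhf p w - df p w)) (at p)"
  unfolding g_def[abs_def] by (intro has_derivative_diff has_derivative_hf has_derivative_f)

lemma n_unit: "p \<in> U \<Longrightarrow> inner (n p) (n p) = 1"
  using immersion_f by (simp add: normal_f immersion_on_def norm_gauss_map flip: power2_norm_eq_inner)

lemma f_tangent_orthogonal:
  "p \<in> U \<Longrightarrow> inner (pu f p) (n p) = 0" "p \<in> U \<Longrightarrow> inner (pv f p) (n p) = 0"
  by (simp_all add: normal_f inner_gauss_map)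

lemma dn_orthogonal:
  assumes "p \<in> U"
  shows "inner (dn p w) (n p) = 0"
  using inner_derivative_if_inner_constant[OF open_U assms n_unit
      has_derivative_n[OF assms] has_derivative_n[OF assms]]
  by (simp add: inner_commute)

lemma df_orthogonal:
  assumes "p \<in> U"
  shows "inner (df p w) (n p) = 0"
proof -
  have "linear (df p)"
    using has_derivative_f[OF assms] by (rule has_derivative_linear)
  then show ?thesis
    using linear_pair_expand[of "df p" w] f_tangent_orthogonal[OF assms]
    by (simp add: pu_def pv_def inner_add_left)
qed

lemma dhf_eq:
  assumes "p \<in> U"
  shows "dhf p w = (t * inner (g p) (g p)) *\<^sub>R reflect (g p) (dn p w)"
proof -
  have "Imq (dhf p w) = t *\<^sub>R qmult (qmult (Imq (g p)) (Imq (dn p w))) (Imq (g p))"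
    using darboux assms unfolding darboux_transform_def g_def by blast
  then have "dhf p w = t *\<^sub>R snd (qmult (qmult (Imq (g p)) (Imq (dn p w))) (Imq (g p)))"
    by (metis Imq_def snd_conv snd_scaleR)
  then show ?thesis
    by (simp add: snd_qmult_Imq_sandwich)
qed

lemma g_nonzero:
  assumes "p \<in> U"
  shows "g p \<noteq> 0"
proof
  assume "g p = 0"
  then have "pu hf p = 0"
    using dhf_eq[OF assms] by (simp add: pu_def)
  then show False
    using immersion_hf assms by (auto simp: immersion_on_def)
qed

lemma hf_tangent_orthogonal:
  assumes "p \<in> U"
  shows "inner (dhf p w) (reflect (g p) (n p)) = 0"
  using dhf_eq[OF assms] inner_reflect_reflect[OF g_nonzero[OF assms]] dn_orthogonal[OF assms]
  by simp

lemma has_derivative_reflected_normal: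
  assumes "p \<in> U"
  shows "((\<lambda>q. reflect (g q) (n q)) has_derivative
           (\<lambda>w. reflect_derivative (g p) (n p) (dhf p w - df p w) (dn p w))) (at p)"
  using has_derivative_g[OF assms] has_derivative_n[OF assms] g_nonzero[OF assms]
  by (rule has_derivative_reflect)

lemma defect_normal_energy:
  assumes "p \<in> U"
  shows "defect p * (inner (pu n p) (pu n p) + inner (pv n p) (pv n p)) = 0"
proof -
  let ?N = "inner (g p) (g p)" and ?k = "inner (g p) (n p)"
  let ?dnh = "\<lambda>w. reflect_derivative (g p) (n p) (dhf p w - df p w) (dn p w)"
  have key: "inner (dhf p w) (?dnh w)
      = t * ?N * (1 - 2 * t * ?k) * inner (dn p w) (dn p w) + 2 * t * ?k * inner (dn p w) (df p w)" for w
    using inner_reflect_derivative_darboux[OF dn_orthogonal[OF assms] df_orthogonal[OF assms]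
        g_nonzero[OF assms]]
    by (simp add: dhf_eq[OF assms])
  have "inner (dhf p (1, 0)) (?dnh (1, 0)) + inner (dhf p (0, 1)) (?dnh (0, 1)) = 0"
    using conformal_minimal_normal_field[OF open_U assms immersion_hf conformal_hf minimal_hf
        has_derivative_reflected_normal[OF assms]] hf_tangent_orthogonal
    by (simp add: pu_def pv_def)
  moreover have "inner (dn p (1, 0)) (df p (1, 0)) + inner (dn p (0, 1)) (df p (0, 1)) = 0"
    using conformal_minimal_normal_field[OF open_U assms immersion_f conformal_f minimal_f
        has_derivative_n[OF assms]] f_tangent_orthogonal
    by (simp add: pu_def pv_def inner_commute)
  moreover have "t * ?N * ((1 - 2 * t * ?k)
      * (inner (dn p (1, 0)) (dn p (1, 0)) + inner (dn p (0, 1)) (dn p (0, 1))))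
    = inner (dhf p (1, 0)) (?dnh (1, 0)) + inner (dhf p (0, 1)) (?dnh (0, 1))
      - 2 * t * ?k * (inner (dn p (1, 0)) (df p (1, 0)) + inner (dn p (0, 1)) (df p (0, 1)))"
    unfolding key by (simp add: algebra_simps)
  ultimately have "t * ?N * ((1 - 2 * t * ?k)
      * (inner (dn p (1, 0)) (dn p (1, 0)) + inner (dn p (0, 1)) (dn p (0, 1)))) = 0"
    by simp
  then show ?thesis
    using t_nonzero g_nonzero[OF assms] by (simp add: defect_def pu_def pv_def)
qed

lemma dn_eq_0_if_defect_nonzero:
  assumes "p \<in> U" "defect p \<noteq> 0"
  shows "dn p = (\<lambda>_. 0)"
proof
  fix w
  have "inner (pu n p) (pu n p) + inner (pv n p) (pv n p) = 0"
    using defect_normal_energy[OF assms(1)] assms(2) by simp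
  then have "dn p (1, 0) = 0" "dn p (0, 1) = 0"
    by (metis add_nonneg_eq_0_iff inner_ge_zero inner_eq_zero_iff pu_def pv_def)+
  moreover have "linear (dn p)"
    using has_derivative_n[OF assms(1)] by (rule has_derivative_linear)
  ultimately show "dn p w = 0"
    using linear_pair_expand[of "dn p" w] by simp
qed

lemma has_derivative_defect:
  assumes "p \<in> U"
  shows "(defect has_derivative
    (\<lambda>w. - (2 * t * (inner (g p) (dn p w) + inner (dhf p w - df p w) (n p))))) (at p)"
proof -
  have "((\<lambda>q. inner (g q) (n q)) has_derivative
      (\<lambda>w. inner (g p) (dn p w) + inner (dhf p w - df p w) (n p))) (at p)"
    using has_derivative_g[OF assms] has_derivative_n[OF assms] by (rule has_derivative_inner)
  then have "((\<lambda>q. 1 - 2 * t * inner (g q) (n q)) has_derivative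
      (\<lambda>w. 0 - 2 * t * (inner (g p) (dn p w) + inner (dhf p w - df p w) (n p)))) (at p)"
    by (intro has_derivative_diff has_derivative_const has_derivative_mult_right)
  then show ?thesis
    by (simp add: defect_def[abs_def])
qed

lemma continuous_on_defect: "continuous_on U defect"
  by (rule continuous_at_imp_continuous_on) (blast intro: has_derivative_continuous has_derivative_defect)

lemma has_derivative_defect_if_nonzero:
  assumes "p \<in> U" "defect p \<noteq> 0"
  shows "(defect has_derivative (\<lambda>_. 0)) (at p)"
  using has_derivative_defect[OF assms(1)]
  by (simp add: dn_eq_0_if_defect_nonzero[OF assms] dhf_eq[OF assms(1)] reflect_def
      df_orthogonal[OF assms(1)] inner_diff_left)

lemma gauss_curvature_eq_0_if_defect_nonzero:
  assumes "p \<in> U" "defect p \<noteq> 0"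
  shows "gauss_curvature f p = 0"
  using open_U assms(1) immersion_f normal_f
  by (rule gauss_curvature_eq_0_if_critical_normal)
    (use has_derivative_n[OF assms(1)] in \<open>unfold dn_eq_0_if_defect_nonzero[OF assms]\<close>)

lemma hf_eq_if_defect_eq_0:
  assumes "p \<in> U" "defect p = 0"
  shows "hf p = f p + (1 / t) *\<^sub>R iinv (reflect (g p) (n p) - n p)"
proof -
  have "2 * inner (g p) (n p) = 1 / t"
    using assms(2) t_nonzero by (simp add: defect_def field_simps)
  then have "reflect (g p) (n p) - n p = (1 / t) *\<^sub>R iinv (g p)"
    by (simp add: reflect_minus_self)
  then show ?thesis
    using t_nonzero by (simp add: iinv_scaleR iinv_iinv g_def)
qed

end

theorem corollary3p3:
  fixes U :: "(real \<times> real) set"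
    and f hf n hn :: "real \<times> real \<Rightarrow> real^3"
    and t :: real
  assumes "open U" and "connected U" and "U \<noteq> {}"
    and "immersion_on U f" and "conformal_on U f" and "minimal_on U f" and "nonflat_on U f"
    and "immersion_on U hf" and "conformal_on U hf" and "minimal_on U hf" and "nonflat_on U hf"
    and "darboux_pair U f hf"
    and "t \<noteq> 0"
    and "\<forall>p\<in>U. n p = gauss_map f p"
    and "darboux_transform U f n t hf"
    and "\<forall>p\<in>U. Imq (hn p) = - qmult (qmult (Imq (iinv (hf p - f p))) (Imq (n p))) (Imq (hf p - f p))"
  shows "\<exists>c. \<forall>p\<in>U. hf p = f p + (1 / t) *\<^sub>R iinv (hn p - n p) + c"
proof -
  interpret minimal_darboux_transform U f hf n t
    using assms by unfold_locales auto
  obtain p0 where p0: "p0 \<in> U" "gauss_curvature f p0 \<noteq> 0"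
    using \<open>nonflat_on U f\<close> by (auto simp: nonflat_on_def)
  then have "defect p0 = 0"
    using gauss_curvature_eq_0_if_defect_nonzero by blast
  have "defect p = 0" if "p \<in> U" for p
    using \<open>open U\<close> \<open>connected U\<close> continuous_on_defect has_derivative_defect_if_nonzero
      p0(1) \<open>defect p0 = 0\<close> that
    by (rule zero_if_locally_constant_where_nonzero)
  moreover have "hn p = reflect (g p) (n p)" if "p \<in> U" for p
  proof -
    have "hn p = - snd (qmult (qmult (Imq (iinv (g p))) (Imq (n p))) (Imq (g p)))"
      using assms(16) that by (metis Imq_def g_def snd_conv snd_uminus)
    then show ?thesis
      using g_nonzero[OF that] by (simp add: reflect_eq_conjugation)
  qed
  ultimately have "\<forall>p\<in>U. hf p = f p + (1 / t) *\<^sub>R iinv (hn p - n p) + 0"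
    using hf_eq_if_defect_eq_0 by simp
  then show ?thesis ..
qed

end
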